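(* Let $n\ge2$. The set $\mathcal{C}=\{N\in\mathcal{G}_n:\mathbb{F}_n/N\text{ is co-Hopfian}\}$ is in $\mathbf{\Pi}^0_2$, and $\mathcal{C}$ is not closed in $\mathcal{G}_n$.
   Context: $\mathbb{F}_n$ is the free group on $\gamma_1,\dots,\gamma_n$. $\mathcal{G}_n$ is the set of normal subgroups $N\trianglelefteq\mathbb{F}_n$, viewed as a subset of $\{0,1\}^{\mathbb{F}_n}$ with the subspace topology of the product of discrete topologies (a compact zero-dimensional Polish space). A group is co-Hopfian if every injective endomorphism of it is an isomorphism. $\mathbf{\Pi}^0_2$ = countable intersections of open sets. *)

theory Defs
  imports "HOL-Analysis.Analysis" "HOL-Algebra.Algebra"
begin

text \<open>Free group on generators 0..n-1 (standing for gamma_1..gamma_n): reduced words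
  over letters (i, b), where b = True means the inverse of generator i.\<close>

type_synonym letter = "nat \<times> bool"

definition inv_letter :: "letter \<Rightarrow> letter" where
  "inv_letter a = (fst a, \<not> snd a)"

fun reduced :: "letter list \<Rightarrow> bool" where
  "reduced [] = True"
| "reduced [a] = True"
| "reduced (a # b # w) = (b \<noteq> inv_letter a \<and> reduced (b # w))"

definition red_cons :: "letter \<Rightarrow> letter list \<Rightarrow> letter list" where
  "red_cons a w = (case w of [] \<Rightarrow> [a]
      | b # w' \<Rightarrow> (if b = inv_letter a then w' else a # w))"

definition reduce :: "letter list \<Rightarrow> letter list" where
  "reduce xs = foldr red_cons xs []"

definition free_group :: "nat \<Rightarrow> letter list monoid" where
  "free_group n = \<lparr> carrier = {w. reduced w \<and> (\<forall>a \<in> set w. fst a < n)},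
                    mult = (\<lambda>x y. reduce (x @ y)),
                    one = [] \<rparr>"

definition co_hopfian :: "('a, 'b) monoid_scheme \<Rightarrow> bool" where
  "co_hopfian G \<longleftrightarrow>
     (\<forall>h \<in> hom G G. inj_on h (carrier G) \<longrightarrow> h \<in> iso G G)"

definition cantor_top :: "nat \<Rightarrow> (letter list \<Rightarrow> bool) topology" where
  "cantor_top n = product_topology (\<lambda>_. discrete_topology UNIV) (carrier (free_group n))"

definition char_fun :: "nat \<Rightarrow> letter list set \<Rightarrow> (letter list \<Rightarrow> bool)" where
  "char_fun n N = (\<lambda>w \<in> carrier (free_group n). w \<in> N)"

definition Gn :: "nat \<Rightarrow> (letter list \<Rightarrow> bool) set" where
  "Gn n = char_fun n ` {N. normal N (free_group n)}"

definition Gn_top :: "nat \<Rightarrow> (letter list \<Rightarrow> bool) topology" where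
  "Gn_top n = subtopology (cantor_top n) (Gn n)"

definition Pi02 :: "'a topology \<Rightarrow> 'a set \<Rightarrow> bool" where
  "Pi02 T A \<longleftrightarrow> (\<exists>V :: nat \<Rightarrow> 'a set. (\<forall>k. openin T (V k)) \<and> A = \<Inter> (range V))"

end

theory Submission
  imports Defs
begin

text \<open>Every endomorphism of \<open>F\<^sub>n/N\<close> lifts to an endomorphism of \<open>F\<^sub>n\<close>, i.e. to a
  substitution of words \<open>u\<^sub>1, \<dots>, u\<^sub>n\<close> for the generators. Hence \<open>F\<^sub>n/N\<close> is co-Hopfian iff
  for every tuple \<open>u\<close>: if the substitution maps \<open>N\<close> into \<open>N\<close> and pulls \<open>N\<close> back to \<open>N\<close>
  (so that it induces an injective endomorphism of \<open>F\<^sub>n/N\<close>), then every generator is hit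
  modulo \<open>N\<close>. A failure of either premise is witnessed by a single word and the conclusion by
  one word per generator, so for fixed \<open>u\<close> this is an open condition on \<open>N\<close>; intersecting over
  the countably many tuples gives a \<open>\<Pi>\<^sup>0\<^sub>2\<close> set.

  Let \<open>K\<^sub>k\<close> be the kernel of the map \<open>F\<^sub>n \<rightarrow> \<int>/k\<close> given by the exponent sum of \<open>\<gamma>\<^sub>1\<close>. For
  \<open>k > 0\<close> the quotient \<open>F\<^sub>n/K\<^sub>k \<cong> \<int>/k\<close> is finite, hence co-Hopfian, while \<open>F\<^sub>n/K\<^sub>0 \<cong> \<int>\<close> is not
  (\<open>x \<mapsto> 2x\<close>). Since \<open>K\<^sub>k \<rightarrow> K\<^sub>0\<close> as \<open>k \<rightarrow> \<infinity>\<close>, the set is not closed.\<close>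

section \<open>Free groups\<close>

lemma inv_letter_inv_letter [simp]: "inv_letter (inv_letter a) = a"
  by (simp add: inv_letter_def)

lemma inv_letter_neq [simp]: "inv_letter a \<noteq> a" "a \<noteq> inv_letter a"
  by (auto simp: inv_letter_def prod_eq_iff)

lemma fst_inv_letter [simp]: "fst (inv_letter a) = fst a"
  by (simp add: inv_letter_def)

lemma reduced_Cons_iff: "reduced (a # w) \<longleftrightarrow> reduced w \<and> (w \<noteq> [] \<longrightarrow> hd w \<noteq> inv_letter a)"
  by (cases w) auto

lemma reduced_red_cons: "reduced w \<Longrightarrow> reduced (red_cons a w)"
  by (cases w) (auto simp: red_cons_def reduced_Cons_iff)

lemma set_red_cons: "set (red_cons a w) \<subseteq> insert a (set w)"
  by (cases w) (auto simp: red_cons_def)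

lemma red_cons_reduced: "reduced (a # w) \<Longrightarrow> red_cons a w = a # w"
  by (cases w) (auto simp: red_cons_def)

lemma red_cons_inv_letter: "reduced v \<Longrightarrow> red_cons a (red_cons (inv_letter a) v) = v"
  by (cases v rule: reduced.cases) (auto simp: red_cons_def)

text \<open>For reduced \<open>v\<close>, \<open>red_append w v\<close> is the free reduction of \<open>w @ v\<close>.\<close>

abbreviation red_append :: "letter list \<Rightarrow> letter list \<Rightarrow> letter list" where
  "red_append w v \<equiv> foldr red_cons w v"

lemma reduced_red_append: "reduced v \<Longrightarrow> reduced (red_append w v)"
  by (induction w) (auto intro: reduced_red_cons)

lemma set_red_append: "set (red_append w v) \<subseteq> set w \<union> set v"
  by (induction w) (use set_red_cons in fastforce)+

lemma red_append_Nil_reduced: "reduced w \<Longrightarrow> red_append w [] = w"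
  by (induction w) (simp_all add: reduced_Cons_iff red_cons_reduced)

lemma red_append_red_append_Nil: "reduced v \<Longrightarrow> red_append (red_append w []) v = red_append w v"
proof (induction w)
  case (Cons a w)
  define p where "p = red_append w []"
  have IH: "red_append p v = red_append w v"
    using Cons unfolding p_def by simp
  show ?case
  proof (cases "p \<noteq> [] \<and> hd p = inv_letter a")
    case True
    then obtain p' where p: "p = inv_letter a # p'"
      by (cases p) auto
    have "red_append (red_cons a p) v = red_append p' v"
      using p by (simp add: red_cons_def)
    also have "\<dots> = red_cons a (red_append p v)"
      using p red_cons_inv_letter[of "red_append p' v" a] reduced_red_append[OF Cons.prems] by simp
    finally show ?thesis
      using IH p_def by simp
  next
    case False
    then have "red_cons a p = a # p"
      by (cases p) (auto simp: red_cons_def)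
    then show ?thesis
      using IH p_def by simp
  qed
qed simp

lemma red_append_inverse: "reduced v \<Longrightarrow> red_append (rev (map inv_letter w)) (red_append w v) = v"
  by (induction w) (simp_all add: red_cons_inv_letter[of _ "inv_letter _", simplified] reduced_red_append)

lemma carrier_free_group: "carrier (free_group n) = {w. reduced w \<and> (\<forall>a\<in>set w. fst a < n)}"
  by (simp add: free_group_def)

lemma mult_free_group: "x \<otimes>\<^bsub>free_group n\<^esub> y = red_append x (red_append y [])"
  by (simp add: free_group_def reduce_def)

lemma one_free_group: "\<one>\<^bsub>free_group n\<^esub> = []"
  by (simp add: free_group_def)

lemma group_free_group: "group (free_group n)"
proof (rule groupI)
  fix x y
  assume "x \<in> carrier (free_group n)" "y \<in> carrier (free_group n)"
  then show "x \<otimes>\<^bsub>free_group n\<^esub> y \<in> carrier (free_group n)"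
    using set_red_append[of x "red_append y []"] set_red_append[of y "[]"]
    by (auto simp: carrier_free_group mult_free_group intro!: reduced_red_append)
next
  fix x y z
  have rz: "reduced (red_append z [])"
    by (simp add: reduced_red_append)
  have "red_append (red_append x (red_append y [])) (red_append z [])
      = red_append (red_append (x @ y) []) (red_append z [])"
    by (simp add: foldr_append)
  also have "\<dots> = red_append x (red_append y (red_append z []))"
    by (subst red_append_red_append_Nil[OF rz]) (simp add: foldr_append)
  also have "\<dots> = red_append x (red_append (red_append (y @ z) []) [])"
    by (subst red_append_red_append_Nil) (simp_all add: foldr_append reduced_red_append)
  finally show "x \<otimes>\<^bsub>free_group n\<^esub> y \<otimes>\<^bsub>free_group n\<^esub> z
      = x \<otimes>\<^bsub>free_group n\<^esub> (y \<otimes>\<^bsub>free_group n\<^esub> z)"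
    by (simp add: mult_free_group foldr_append)
next
  fix x
  assume x: "x \<in> carrier (free_group n)"
  then show "\<one>\<^bsub>free_group n\<^esub> \<otimes>\<^bsub>free_group n\<^esub> x = x"
    by (simp add: one_free_group mult_free_group carrier_free_group red_append_Nil_reduced)
  let ?y = "red_append (rev (map inv_letter x)) []"
  have "?y \<in> carrier (free_group n)"
    using set_red_append[of "rev (map inv_letter x)" "[]"] x
    by (fastforce simp: carrier_free_group intro!: reduced_red_append)
  moreover have "?y \<otimes>\<^bsub>free_group n\<^esub> x = \<one>\<^bsub>free_group n\<^esub>"
    using x red_append_red_append_Nil[of x "rev (map inv_letter x)"] red_append_inverse[of "[]" x]
    by (simp add: mult_free_group one_free_group carrier_free_group red_append_Nil_reduced)
  ultimately show "\<exists>y\<in>carrier (free_group n). y \<otimes>\<^bsub>free_group n\<^esub> x = \<one>\<^bsub>free_group n\<^esub>"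
    by blast
qed (simp add: carrier_free_group one_free_group)

interpretation F: group "free_group n"
  by (rule group_free_group)

abbreviation free_gen :: "nat \<Rightarrow> letter list" where
  "free_gen i \<equiv> [(i, False)]"

lemma letter_in_free_group: "fst a < n \<Longrightarrow> [a] \<in> carrier (free_group n)"
  by (simp add: carrier_free_group)

lemma inv_letter_free_group: "fst a < n \<Longrightarrow> inv\<^bsub>free_group n\<^esub> [a] = [inv_letter a]"
  by (rule F.inv_equality) (auto simp: mult_free_group one_free_group letter_in_free_group red_cons_def)

lemma Cons_eq_mult_free_group:
  "a # w \<in> carrier (free_group n) \<Longrightarrow>
     w \<in> carrier (free_group n) \<and> fst a < n \<and> a # w = [a] \<otimes>\<^bsub>free_group n\<^esub> w"
  by (auto simp: carrier_free_group mult_free_group reduced_Cons_iff red_append_Nil_reduced red_cons_reduced)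

lemma free_group_induct [consumes 1, case_names Nil mult_letter]:
  assumes "w \<in> carrier (free_group n)" "P []"
    and "\<And>a w. w \<in> carrier (free_group n) \<Longrightarrow> fst a < n \<Longrightarrow> P w \<Longrightarrow> P ([a] \<otimes>\<^bsub>free_group n\<^esub> w)"
  shows "P w"
  using assms(1)
proof (induction w)
  case (Cons a w)
  with Cons_eq_mult_free_group[OF Cons.prems] assms(3) show ?case
    by metis
qed (use assms in auto)

lemma free_group_generated:
  assumes H: "subgroup H (free_group n)" and gens: "\<And>i. i < n \<Longrightarrow> free_gen i \<in> H"
  shows "H = carrier (free_group n)"
proof
  show "H \<subseteq> carrier (free_group n)"
    using H by (rule subgroup.subset)
  show "carrier (free_group n) \<subseteq> H"
  proof
    fix w
    assume "w \<in> carrier (free_group n)"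
    then show "w \<in> H"
    proof (induction rule: free_group_induct)
      case Nil
      show ?case
        using subgroup.one_closed[OF H] by (simp add: one_free_group)
    next
      case (mult_letter a w)
      obtain i b where a: "a = (i, b)"
        by (cases a)
      have "[a] = (if b then inv\<^bsub>free_group n\<^esub> free_gen i else free_gen i)"
        using mult_letter(2) a inv_letter_free_group[of "(i, False)" n] by (simp add: inv_letter_def)
      then have "[a] \<in> H"
        using gens[of i] mult_letter(2) a subgroup.m_inv_closed[OF H] by simp
      then show ?case
        using subgroup.m_closed[OF H] mult_letter(3) by simp
    qed
  qed
qed

lemma free_group_hom_eqI:
  assumes "group G" and f: "f \<in> hom (free_group n) G" and g: "g \<in> hom (free_group n) G"
    and gens: "\<And>i. i < n \<Longrightarrow> f (free_gen i) = g (free_gen i)"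
    and w: "w \<in> carrier (free_group n)"
  shows "f w = g w"
proof -
  interpret f: group_hom "free_group n" G f
    using assms by (simp add: group_hom_def group_hom_axioms_def group_free_group)
  interpret g: group_hom "free_group n" G g
    using assms by (simp add: group_hom_def group_hom_axioms_def group_free_group)
  have "subgroup {x \<in> carrier (free_group n). f x = g x} (free_group n)"
    by (rule F.subgroupI) (auto simp: f.hom_mult g.hom_mult)
  then have "{x \<in> carrier (free_group n). f x = g x} = carrier (free_group n)"
    by (rule free_group_generated) (simp add: gens letter_in_free_group)
  with w show ?thesis
    by blast
qed

section \<open>Substitution endomorphisms\<close>

text \<open>The tuple of images of the generators is a list, so that tuples range over a countable
  type; entries that are missing or outside the free group are read as the identity.\<close>

definition subst_gen :: "nat \<Rightarrow> letter list list \<Rightarrow> nat \<Rightarrow> letter list" where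
  "subst_gen n us i = (if i < length us \<and> us ! i \<in> carrier (free_group n) then us ! i else [])"

definition subst_letter :: "nat \<Rightarrow> letter list list \<Rightarrow> letter \<Rightarrow> letter list" where
  "subst_letter n us a =
     (if snd a then inv\<^bsub>free_group n\<^esub> (subst_gen n us (fst a)) else subst_gen n us (fst a))"

definition word_subst :: "nat \<Rightarrow> letter list list \<Rightarrow> letter list \<Rightarrow> letter list" where
  "word_subst n us w = foldr (\<lambda>a v. subst_letter n us a \<otimes>\<^bsub>free_group n\<^esub> v) w \<one>\<^bsub>free_group n\<^esub>"

lemma subst_gen_carrier: "subst_gen n us i \<in> carrier (free_group n)"
  by (simp add: subst_gen_def carrier_free_group)

lemma subst_letter_carrier: "subst_letter n us a \<in> carrier (free_group n)"
  by (simp add: subst_letter_def subst_gen_carrier)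

lemma subst_letter_inv_letter:
  "subst_letter n us (inv_letter a) = inv\<^bsub>free_group n\<^esub> (subst_letter n us a)"
  by (auto simp: subst_letter_def inv_letter_def subst_gen_carrier)

lemma word_subst_carrier: "word_subst n us w \<in> carrier (free_group n)"
  unfolding word_subst_def by (induction w) (auto simp: subst_letter_carrier)

lemma word_subst_Nil [simp]: "word_subst n us [] = \<one>\<^bsub>free_group n\<^esub>"
  by (simp add: word_subst_def)

lemma word_subst_Cons: "word_subst n us (a # w) = subst_letter n us a \<otimes>\<^bsub>free_group n\<^esub> word_subst n us w"
  by (simp add: word_subst_def)

lemma word_subst_free_gen: "word_subst n us (free_gen i) = subst_gen n us i"
  by (simp add: word_subst_Cons subst_letter_def subst_gen_carrier)

lemma word_subst_red_cons:
  "word_subst n us (red_cons a v) = subst_letter n us a \<otimes>\<^bsub>free_group n\<^esub> word_subst n us v"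
proof (cases "v \<noteq> [] \<and> hd v = inv_letter a")
  case True
  then obtain v' where v: "v = inv_letter a # v'"
    by (cases v) auto
  have "subst_letter n us a \<otimes>\<^bsub>free_group n\<^esub> word_subst n us v = word_subst n us v'"
    by (simp add: v word_subst_Cons subst_letter_inv_letter subst_letter_carrier word_subst_carrier
        flip: F.m_assoc)
  then show ?thesis
    by (simp add: v red_cons_def)
next
  case False
  then have "red_cons a v = a # v"
    by (cases v) (auto simp: red_cons_def)
  then show ?thesis
    by (simp add: word_subst_Cons)
qed

lemma word_subst_red_append:
  "word_subst n us (red_append w v) = word_subst n us w \<otimes>\<^bsub>free_group n\<^esub> word_subst n us v"
  by (induction w)
    (simp_all add: word_subst_red_cons word_subst_Cons word_subst_carrier subst_letter_carrier F.m_assoc)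

lemma word_subst_mult:
  "word_subst n us (x \<otimes>\<^bsub>free_group n\<^esub> y) = word_subst n us x \<otimes>\<^bsub>free_group n\<^esub> word_subst n us y"
  by (simp only: mult_free_group[of n x y] word_subst_red_append) (simp add: word_subst_carrier)

lemma word_subst_hom: "word_subst n us \<in> hom (free_group n) (free_group n)"
  by (rule homI) (simp_all add: word_subst_carrier word_subst_mult)

section \<open>Endomorphisms of quotient groups\<close>

lemma (in group_hom) subgroup_vimage:
  assumes "subgroup K H"
  shows "subgroup (h -` K \<inter> carrier G) G"
proof (rule G.subgroupI)
  show "h -` K \<inter> carrier G \<noteq> {}"
    using subgroup.one_closed[OF assms] hom_one G.one_closed by blast
qed (use assms in \<open>auto simp: subgroup.m_closed subgroup.m_inv_closed\<close>)

context normal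
begin

lemma rcos_eq_iff:
  assumes "x \<in> carrier G" "y \<in> carrier G"
  shows "H #> x = H #> y \<longleftrightarrow> x \<otimes> inv y \<in> H"
proof
  assume "H #> x = H #> y"
  then have "x \<in> H #> y"
    using rcos_self[OF assms(1) subgroup_axioms] by simp
  then show "x \<otimes> inv y \<in> H"
    by (rule rcos_module_imp[OF is_group assms(2)])
next
  assume "x \<otimes> inv y \<in> H"
  then have "x \<in> H #> y"
    by (rule rcos_module_rev[OF is_group assms(2,1)])
  then show "H #> x = H #> y"
    by (rule repr_independence[OF _ assms(2) subgroup_axioms, symmetric])
qed

lemma rcos_eq_self_iff: "x \<in> carrier G \<Longrightarrow> H #> x = H \<longleftrightarrow> x \<in> H"
  using rcos_eq_iff[of x \<one>] by (simp add: coset_mult_one subset)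

lemma FactGroup_elem_eq_rcos:
  assumes "A \<in> carrier (G Mod H)" "x \<in> A"
  shows "x \<in> carrier G \<and> A = H #> x"
proof -
  obtain y where y: "y \<in> carrier G" "A = H #> y"
    using assms(1) by (auto simp: carrier_FactGroup)
  then show ?thesis
    using assms(2) elemrcos_carrier[OF is_group] repr_independence[OF _ _ subgroup_axioms] by auto
qed

lemma induced_endo_exists:
  assumes \<sigma>: "\<sigma> \<in> hom G G" and preserves: "\<And>r. r \<in> H \<Longrightarrow> \<sigma> r \<in> H"
  shows "\<exists>h \<in> hom (G Mod H) (G Mod H). \<forall>x \<in> carrier G. h (H #> x) = H #> \<sigma> x"
proof -
  interpret \<sigma>: group_hom G G \<sigma>
    using \<sigma> by (simp add: group_hom_def group_hom_axioms_def is_group)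
  define h where "h A = H #> \<sigma> (SOME x. x \<in> A)" for A
  have h: "h (H #> x) = H #> \<sigma> x" if x: "x \<in> carrier G" for x
  proof -
    define x' where "x' = (SOME x'. x' \<in> H #> x)"
    have "x' \<in> H #> x"
      unfolding x'_def using rcos_self[OF x subgroup_axioms] by (rule someI)
    then have x': "x' \<in> carrier G" "x' \<otimes> inv x \<in> H"
      using elemrcos_carrier[OF is_group x] rcos_module_imp[OF is_group x] by auto
    then have "\<sigma> x' \<otimes> inv \<sigma> x \<in> H"
      using preserves[of "x' \<otimes> inv x"] x by simp
    then have "H #> \<sigma> x' = H #> \<sigma> x"
      using rcos_eq_iff x x'(1) by simp
    then show ?thesis
      by (simp add: h_def flip: x'_def)
  qed
  have "h \<in> hom (G Mod H) (G Mod H)"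
  proof (rule homI)
    fix A
    assume "A \<in> carrier (G Mod H)"
    then obtain x where "x \<in> carrier G" "A = H #> x"
      by (auto simp: carrier_FactGroup)
    then show "h A \<in> carrier (G Mod H)"
      by (simp add: h carrier_FactGroup)
  next
    fix A B
    assume "A \<in> carrier (G Mod H)" "B \<in> carrier (G Mod H)"
    then obtain x y where "x \<in> carrier G" "A = H #> x" "y \<in> carrier G" "B = H #> y"
      by (auto simp: carrier_FactGroup)
    then show "h (A \<otimes>\<^bsub>G Mod H\<^esub> B) = h A \<otimes>\<^bsub>G Mod H\<^esub> h B"
      by (simp add: h rcos_sum)
  qed
  with h show ?thesis
    by blast
qed

lemma induced_endo_preserves:
  assumes "\<sigma> \<in> hom G G" "h \<in> hom (G Mod H) (G Mod H)"
    and induced: "\<forall>x \<in> carrier G. h (H #> x) = H #> \<sigma> x"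
    and r: "r \<in> H"
  shows "\<sigma> r \<in> H"
proof -
  have r_carrier: "r \<in> carrier G"
    using r subset by blast
  have "h H = H"
    using hom_one[OF assms(2) factorgroup_is_group factorgroup_is_group] by simp
  moreover have "H #> r = H"
    using rcos_eq_self_iff[OF r_carrier] r by blast
  ultimately have "H #> \<sigma> r = H"
    using bspec[OF induced r_carrier] by simp
  then show ?thesis
    using rcos_eq_self_iff hom_in_carrier[OF assms(1) r_carrier] by blast
qed

lemma induced_endo_inj_iff:
  assumes \<sigma>: "\<sigma> \<in> hom G G" and h: "h \<in> hom (G Mod H) (G Mod H)"
    and induced: "\<forall>x \<in> carrier G. h (H #> x) = H #> \<sigma> x"
  shows "inj_on h (carrier (G Mod H)) \<longleftrightarrow> (\<forall>x \<in> carrier G. \<sigma> x \<in> H \<longrightarrow> x \<in> H)"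
proof -
  interpret \<sigma>: group_hom G G \<sigma>
    using \<sigma> by (simp add: group_hom_def group_hom_axioms_def is_group)
  have "h H = H"
    using hom_one[OF h factorgroup_is_group factorgroup_is_group] by simp
  show ?thesis
  proof
    assume inj: "inj_on h (carrier (G Mod H))"
    show "\<forall>x \<in> carrier G. \<sigma> x \<in> H \<longrightarrow> x \<in> H"
    proof (intro ballI impI)
      fix x
      assume x: "x \<in> carrier G" and "\<sigma> x \<in> H"
      then have "h (H #> x) = h H"
        using induced x rcos_eq_self_iff[OF \<sigma>.hom_closed[OF x]] \<open>h H = H\<close> by simp
      moreover have "H #> x \<in> carrier (G Mod H)"
        using x unfolding carrier_FactGroup by blast
      moreover have "H \<in> carrier (G Mod H)"
        using monoid.one_closed[OF group.is_monoid[OF factorgroup_is_group]] by simp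
      ultimately have "H #> x = H"
        using inj_onD[OF inj] by blast
      with x show "x \<in> H"
        using rcos_eq_self_iff by simp
    qed
  next
    assume reflects: "\<forall>x \<in> carrier G. \<sigma> x \<in> H \<longrightarrow> x \<in> H"
    show "inj_on h (carrier (G Mod H))"
    proof (rule inj_onI, clarsimp simp: carrier_FactGroup)
      fix x y
      assume x: "x \<in> carrier G" and y: "y \<in> carrier G" and "h (H #> x) = h (H #> y)"
      then have "H #> \<sigma> x = H #> \<sigma> y"
        using induced x y by simp
      then have "\<sigma> (x \<otimes> inv y) \<in> H"
        using rcos_eq_iff[OF \<sigma>.hom_closed[OF x] \<sigma>.hom_closed[OF y]] x y by simp
      then have "x \<otimes> inv y \<in> H"
        using reflects x y by blast
      then show "H #> x = H #> y"
        using rcos_eq_iff[OF x y] by blast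
    qed
  qed
qed

lemma rcos_in_induced_image_iff:
  assumes \<sigma>: "\<sigma> \<in> hom G G" and induced: "\<forall>x \<in> carrier G. h (H #> x) = H #> \<sigma> x"
    and x: "x \<in> carrier G"
  shows "H #> x \<in> h ` carrier (G Mod H) \<longleftrightarrow> (\<exists>v \<in> carrier G. \<sigma> v \<otimes> inv x \<in> H)"
proof -
  have "H #> x \<in> h ` carrier (G Mod H) \<longleftrightarrow> (\<exists>v \<in> carrier G. H #> x = h (H #> v))"
    unfolding carrier_FactGroup by blast
  also have "\<dots> \<longleftrightarrow> (\<exists>v \<in> carrier G. H #> \<sigma> v = H #> x)"
    by (rule bex_cong[OF refl]) (simp add: induced eq_commute)
  also have "\<dots> \<longleftrightarrow> (\<exists>v \<in> carrier G. \<sigma> v \<otimes> inv x \<in> H)"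
    using rcos_eq_iff[OF hom_in_carrier[OF \<sigma>] x] by blast
  finally show ?thesis .
qed

end

section \<open>Co-Hopfian quotients of free groups\<close>

lemma FactGroup_free_group_endo_induced:
  assumes N: "N \<lhd> free_group n" and h: "h \<in> hom (free_group n Mod N) (free_group n Mod N)"
  shows "\<exists>us. \<forall>w \<in> carrier (free_group n).
           h (N #>\<^bsub>free_group n\<^esub> w) = N #>\<^bsub>free_group n\<^esub> word_subst n us w"
proof -
  interpret N: normal N "free_group n"
    by (rule N)
  let ?\<pi> = "\<lambda>w. N #>\<^bsub>free_group n\<^esub> w"
  define x where "x i = (SOME x. x \<in> h (?\<pi> (free_gen i)))" for i
  define us where "us = map x [0..<n]"
  have gens: "h (?\<pi> (free_gen i)) = ?\<pi> (word_subst n us (free_gen i))" if i: "i < n" for i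
  proof -
    have "?\<pi> (free_gen i) \<in> carrier (free_group n Mod N)"
      using i letter_in_free_group[of "(i, False)" n] unfolding carrier_FactGroup by simp
    then have hi: "h (?\<pi> (free_gen i)) \<in> carrier (free_group n Mod N)"
      using hom_in_carrier[OF h] by blast
    then obtain z where "z \<in> carrier (free_group n)" "h (?\<pi> (free_gen i)) = ?\<pi> z"
      unfolding carrier_FactGroup by blast
    then have "\<exists>x. x \<in> h (?\<pi> (free_gen i))"
      using F.rcos_self[OF _ N.subgroup_axioms] by auto
    then have "x i \<in> h (?\<pi> (free_gen i))"
      unfolding x_def by (rule someI_ex)
    then have "x i \<in> carrier (free_group n)" "h (?\<pi> (free_gen i)) = ?\<pi> (x i)"
      using N.FactGroup_elem_eq_rcos[OF hi] by auto
    moreover have "word_subst n us (free_gen i) = x i"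
      using i \<open>x i \<in> carrier (free_group n)\<close> by (simp add: word_subst_free_gen subst_gen_def us_def)
    ultimately show ?thesis
      by simp
  qed
  have "w \<in> carrier (free_group n) \<Longrightarrow> (h \<circ> ?\<pi>) w = (?\<pi> \<circ> word_subst n us) w" for w
    by (rule free_group_hom_eqI[OF N.factorgroup_is_group hom_compose[OF N.r_coset_hom_Mod h]
          hom_compose[OF word_subst_hom N.r_coset_hom_Mod]]) (simp_all add: gens)
  then show ?thesis
    by auto
qed

lemma induced_endo_surj_iff_free_group:
  assumes N: "N \<lhd> free_group n" and \<sigma>: "\<sigma> \<in> hom (free_group n) (free_group n)"
    and h: "h \<in> hom (free_group n Mod N) (free_group n Mod N)"
    and induced: "\<forall>w \<in> carrier (free_group n).
                    h (N #>\<^bsub>free_group n\<^esub> w) = N #>\<^bsub>free_group n\<^esub> \<sigma> w"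
  shows "h ` carrier (free_group n Mod N) = carrier (free_group n Mod N) \<longleftrightarrow>
         (\<forall>i<n. \<exists>v \<in> carrier (free_group n).
                   \<sigma> v \<otimes>\<^bsub>free_group n\<^esub> inv\<^bsub>free_group n\<^esub> free_gen i \<in> N)"
proof -
  interpret N: normal N "free_group n"
    by (rule N)
  interpret h: group_hom "free_group n Mod N" "free_group n Mod N" h
    using h by (simp add: group_hom_def group_hom_axioms_def N.factorgroup_is_group)
  interpret \<pi>: group_hom "free_group n" "free_group n Mod N" "\<lambda>w. N #>\<^bsub>free_group n\<^esub> w"
    by (simp add: group_hom_def group_hom_axioms_def N.factorgroup_is_group N.r_coset_hom_Mod
        group_free_group)
  have gen_carrier: "free_gen i \<in> carrier (free_group n)" if "i < n" for i
    using that by (simp add: letter_in_free_group)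
  note gen_in_image_iff = N.rcos_in_induced_image_iff[OF \<sigma> induced]
  show ?thesis
  proof
    assume surj: "h ` carrier (free_group n Mod N) = carrier (free_group n Mod N)"
    have in_image: "N #>\<^bsub>free_group n\<^esub> w \<in> h ` carrier (free_group n Mod N)"
      if "w \<in> carrier (free_group n)" for w
    proof -
      have "N #>\<^bsub>free_group n\<^esub> w \<in> carrier (free_group n Mod N)"
        using that unfolding carrier_FactGroup by (rule imageI)
      then show ?thesis
        by (subst surj)
    qed
    show "\<forall>i<n. \<exists>v \<in> carrier (free_group n).
                 \<sigma> v \<otimes>\<^bsub>free_group n\<^esub> inv\<^bsub>free_group n\<^esub> free_gen i \<in> N"
    proof (intro allI impI)
      fix i
      assume "i < n"
      then show "\<exists>v \<in> carrier (free_group n).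
                   \<sigma> v \<otimes>\<^bsub>free_group n\<^esub> inv\<^bsub>free_group n\<^esub> free_gen i \<in> N"
        using gen_in_image_iff[OF gen_carrier] in_image[OF gen_carrier] by simp
    qed
  next
    let ?P = "(\<lambda>w. N #>\<^bsub>free_group n\<^esub> w) -` h ` carrier (free_group n Mod N) \<inter> carrier (free_group n)"
    assume onto: "\<forall>i<n. \<exists>v \<in> carrier (free_group n).
              \<sigma> v \<otimes>\<^bsub>free_group n\<^esub> inv\<^bsub>free_group n\<^esub> free_gen i \<in> N"
    have "free_gen i \<in> ?P" if "i < n" for i
      using gen_in_image_iff[OF gen_carrier[OF that]] gen_carrier[OF that] onto that by simp
    then have "?P = carrier (free_group n)"
      by (rule free_group_generated[OF \<pi>.subgroup_vimage[OF h.img_is_subgroup]])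
    show "h ` carrier (free_group n Mod N) = carrier (free_group n Mod N)"
    proof
      show "h ` carrier (free_group n Mod N) \<subseteq> carrier (free_group n Mod N)"
        by (rule hom_carrier[OF h])
      show "carrier (free_group n Mod N) \<subseteq> h ` carrier (free_group n Mod N)"
        using \<open>?P = carrier (free_group n)\<close> by (auto simp: carrier_FactGroup)
    qed
  qed
qed

text \<open>The premises say that the substitution descends to an injective endomorphism of
  \<open>F\<^sub>n/N\<close>, the conclusion that the induced endomorphism is onto.\<close>

definition cohopf_condition :: "nat \<Rightarrow> letter list list \<Rightarrow> letter list set \<Rightarrow> bool" where
  "cohopf_condition n us N \<longleftrightarrow>
     (\<forall>r \<in> N. word_subst n us r \<in> N) \<and>
     (\<forall>w \<in> carrier (free_group n). word_subst n us w \<in> N \<longrightarrow> w \<in> N) \<longrightarrow>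
     (\<forall>i<n. \<exists>v \<in> carrier (free_group n).
               word_subst n us v \<otimes>\<^bsub>free_group n\<^esub> inv\<^bsub>free_group n\<^esub> free_gen i \<in> N)"

lemma cohopf_condition_Collect_iff:
  "cohopf_condition n us {w \<in> carrier (free_group n). f w} \<longleftrightarrow>
     (\<exists>r \<in> carrier (free_group n). f r \<and> \<not> f (word_subst n us r)) \<or>
     (\<exists>w \<in> carrier (free_group n). f (word_subst n us w) \<and> \<not> f w) \<or>
     (\<forall>i<n. \<exists>v \<in> carrier (free_group n).
        f (word_subst n us v \<otimes>\<^bsub>free_group n\<^esub> inv\<^bsub>free_group n\<^esub> free_gen i))"
proof -
  have "word_subst n us v \<otimes>\<^bsub>free_group n\<^esub> inv\<^bsub>free_group n\<^esub> free_gen i \<in> carrier (free_group n)"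
    if "i < n" for i v
    using that by (simp add: letter_in_free_group word_subst_carrier)
  then show ?thesis
    unfolding cohopf_condition_def using word_subst_carrier by blast
qed

lemma cohopf_condition_if_co_hopfian:
  assumes N: "N \<lhd> free_group n" and cohopf: "co_hopfian (free_group n Mod N)"
  shows "cohopf_condition n us N"
  unfolding cohopf_condition_def
proof (intro impI, elim conjE)
  interpret N: normal N "free_group n"
    by (rule N)
  assume preserves: "\<forall>r \<in> N. word_subst n us r \<in> N"
    and reflects: "\<forall>w \<in> carrier (free_group n). word_subst n us w \<in> N \<longrightarrow> w \<in> N"
  obtain h where h: "h \<in> hom (free_group n Mod N) (free_group n Mod N)"
    and induced: "\<forall>w \<in> carrier (free_group n).
                    h (N #>\<^bsub>free_group n\<^esub> w) = N #>\<^bsub>free_group n\<^esub> word_subst n us w"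
    using N.induced_endo_exists[OF word_subst_hom[of n us]] preserves by auto
  have "inj_on h (carrier (free_group n Mod N))"
    using N.induced_endo_inj_iff[OF word_subst_hom h induced] reflects by blast
  with cohopf h have "h \<in> iso (free_group n Mod N) (free_group n Mod N)"
    unfolding co_hopfian_def by blast
  then have "h ` carrier (free_group n Mod N) = carrier (free_group n Mod N)"
    by (simp add: iso_def bij_betw_def)
  then show "\<forall>i<n. \<exists>v \<in> carrier (free_group n).
      word_subst n us v \<otimes>\<^bsub>free_group n\<^esub> inv\<^bsub>free_group n\<^esub> free_gen i \<in> N"
    using induced_endo_surj_iff_free_group[OF N word_subst_hom h induced] by blast
qed

lemma co_hopfian_if_cohopf_condition:
  assumes N: "N \<lhd> free_group n" and conds: "\<And>us. cohopf_condition n us N"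
  shows "co_hopfian (free_group n Mod N)"
  unfolding co_hopfian_def
proof (intro ballI impI)
  interpret N: normal N "free_group n"
    by (rule N)
  fix h
  assume h: "h \<in> hom (free_group n Mod N) (free_group n Mod N)"
    and inj: "inj_on h (carrier (free_group n Mod N))"
  obtain us where induced: "\<forall>w \<in> carrier (free_group n).
                    h (N #>\<^bsub>free_group n\<^esub> w) = N #>\<^bsub>free_group n\<^esub> word_subst n us w"
    using FactGroup_free_group_endo_induced[OF N h] by blast
  have "\<forall>r \<in> N. word_subst n us r \<in> N"
    using N.induced_endo_preserves[OF word_subst_hom h induced] by blast
  moreover have "\<forall>w \<in> carrier (free_group n). word_subst n us w \<in> N \<longrightarrow> w \<in> N"
    using N.induced_endo_inj_iff[OF word_subst_hom h induced] inj by blast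
  ultimately have "\<forall>i<n. \<exists>v \<in> carrier (free_group n).
      word_subst n us v \<otimes>\<^bsub>free_group n\<^esub> inv\<^bsub>free_group n\<^esub> free_gen i \<in> N"
    using conds unfolding cohopf_condition_def by blast
  then have "h ` carrier (free_group n Mod N) = carrier (free_group n Mod N)"
    using induced_endo_surj_iff_free_group[OF N word_subst_hom h induced] by blast
  with h inj show "h \<in> iso (free_group n Mod N) (free_group n Mod N)"
    by (simp add: iso_def bij_betw_def)
qed

lemma co_hopfian_FactGroup_free_group_iff:
  "N \<lhd> free_group n \<Longrightarrow> co_hopfian (free_group n Mod N) \<longleftrightarrow> (\<forall>us. cohopf_condition n us N)"
  using cohopf_condition_if_co_hopfian co_hopfian_if_cohopf_condition by blast

lemma co_hopfian_finite: "finite (carrier G) \<Longrightarrow> co_hopfian G"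
  unfolding co_hopfian_def
proof (intro ballI impI)
  fix h
  assume fin: "finite (carrier G)" and h: "h \<in> hom G G" and inj: "inj_on h (carrier G)"
  have "h ` carrier G = carrier G"
    by (rule endo_inj_surj[OF fin hom_carrier[OF h] inj])
  with h inj show "h \<in> iso G G"
    by (simp add: iso_def bij_betw_def)
qed

lemma co_hopfian_iso:
  assumes G: "group G" and "G \<cong> H" and cohopf: "co_hopfian G"
  shows "co_hopfian H"
  unfolding co_hopfian_def
proof (intro ballI impI)
  fix h
  assume h: "h \<in> hom H H" and inj: "inj_on h (carrier H)"
  obtain \<phi> where \<phi>: "\<phi> \<in> iso G H"
    using \<open>G \<cong> H\<close> by (auto simp: is_iso_def)
  define \<psi> where "\<psi> = inv_into (carrier G) \<phi>"
  have \<psi>: "\<psi> \<in> iso H G"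
    unfolding \<psi>_def by (rule group.iso_set_sym[OF G \<phi>])
  have \<phi>_bij: "bij_betw \<phi> (carrier G) (carrier H)" and \<psi>_bij: "bij_betw \<psi> (carrier H) (carrier G)"
    using \<phi> \<psi> by (simp_all add: iso_def)
  have "\<psi> \<circ> h \<circ> \<phi> \<in> hom G G"
    using hom_compose[OF hom_compose[OF iso_imp_homomorphism[OF \<phi>] h] iso_imp_homomorphism[OF \<psi>]]
    by (simp add: comp_assoc)
  moreover have "inj_on (\<psi> \<circ> h \<circ> \<phi>) (carrier G)"
    using \<phi>_bij \<psi>_bij inj hom_carrier[OF h]
    by (auto simp: bij_betw_def intro!: comp_inj_on inj_on_subset[of \<psi> "carrier H"])
  ultimately have "\<psi> \<circ> h \<circ> \<phi> \<in> iso G G"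
    using cohopf by (simp add: co_hopfian_def)
  then have "\<psi> ` h ` \<phi> ` carrier G = carrier G"
    by (simp add: iso_def bij_betw_def image_comp)
  then have "\<psi> ` h ` carrier H = \<psi> ` carrier H"
    using \<phi>_bij \<psi>_bij by (simp add: bij_betw_def)
  then have "h ` carrier H = carrier H"
    using inj_on_image_eq_iff[of \<psi> "carrier H" "h ` carrier H" "carrier H"] \<psi>_bij hom_carrier[OF h]
    unfolding bij_betw_def by blast
  with h inj show "h \<in> iso H H"
    by (simp add: iso_def bij_betw_def)
qed

lemma not_co_hopfian_integer_group: "\<not> co_hopfian integer_group"
proof
  assume "co_hopfian integer_group"
  moreover have "(\<lambda>x. 2 * x) \<in> hom integer_group integer_group"
    by (rule homI) simp_all
  moreover have "inj_on (\<lambda>x::int. 2 * x) (carrier integer_group)"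
    by (simp add: inj_on_def)
  ultimately have "(\<lambda>x::int. 2 * x) \<in> iso integer_group integer_group"
    unfolding co_hopfian_def by blast
  then have "(1::int) \<in> (\<lambda>x. 2 * x) ` UNIV"
    by (simp add: iso_def bij_betw_def)
  then obtain x :: int where "1 = 2 * x"
    by blast
  then show False
    by presburger
qed

section \<open>Quotients by exponent sums\<close>

text \<open>The exponent sum of the generator \<open>\<gamma>\<^sub>1\<close>, which has index \<open>0\<close> here.\<close>

definition letter_exponent :: "letter \<Rightarrow> int" where
  "letter_exponent a = (if fst a = 0 then (if snd a then -1 else 1) else 0)"

definition exponent_sum :: "letter list \<Rightarrow> int" where
  "exponent_sum w = sum_list (map letter_exponent w)"

lemma exponent_sum_Nil [simp]: "exponent_sum [] = 0"
  by (simp add: exponent_sum_def)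

lemma exponent_sum_Cons [simp]: "exponent_sum (a # w) = letter_exponent a + exponent_sum w"
  by (simp add: exponent_sum_def)

lemma exponent_sum_red_cons: "exponent_sum (red_cons a v) = letter_exponent a + exponent_sum v"
  by (cases v) (auto simp: red_cons_def letter_exponent_def inv_letter_def)

lemma exponent_sum_red_append: "exponent_sum (red_append w v) = exponent_sum w + exponent_sum v"
  by (induction w) (simp_all add: exponent_sum_red_cons)

lemma exponent_sum_surj:
  assumes "1 \<le> n"
  shows "exponent_sum ` carrier (free_group n) = UNIV"
proof -
  have "exponent_sum (replicate (nat \<bar>j\<bar>) (0, j < 0)) = j"
    and "replicate (nat \<bar>j\<bar>) (0, j < 0) \<in> carrier (free_group n)" for j :: int
  proof -
    have "reduced (replicate m a)" for m and a :: letter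
      by (induction m) (simp_all add: reduced_Cons_iff)
    then show "replicate (nat \<bar>j\<bar>) (0, j < 0) \<in> carrier (free_group n)"
      using assms by (simp add: carrier_free_group)
    have "exponent_sum (replicate m a) = int m * letter_exponent a" for m a
      by (induction m) (simp_all add: algebra_simps)
    then show "exponent_sum (replicate (nat \<bar>j\<bar>) (0, j < 0)) = j"
      by (simp add: letter_exponent_def)
  qed
  then show ?thesis
    by (metis UNIV_eq_I image_eqI)
qed

lemma exponent_sum_mod_hom:
  "(\<lambda>w. exponent_sum w mod int k) \<in> hom (free_group n) (integer_mod_group k)"
  by (rule homI) (auto simp: carrier_integer_mod_group mult_free_group exponent_sum_red_append mod_add_eq)

definition exponent_kernel :: "nat \<Rightarrow> nat \<Rightarrow> letter list set" where
  "exponent_kernel n k = kernel (free_group n) (integer_mod_group k) (\<lambda>w. exponent_sum w mod int k)"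

lemma exponent_kernel_iff:
  "w \<in> exponent_kernel n k \<longleftrightarrow> w \<in> carrier (free_group n) \<and> int k dvd exponent_sum w"
  by (simp add: exponent_kernel_def kernel_def dvd_eq_mod_eq_0)

lemma group_hom_exponent_sum_mod:
  "group_hom (free_group n) (integer_mod_group k) (\<lambda>w. exponent_sum w mod int k)"
  by (simp add: group_hom_def group_hom_axioms_def group_free_group exponent_sum_mod_hom)

lemma normal_exponent_kernel: "exponent_kernel n k \<lhd> free_group n"
  unfolding exponent_kernel_def by (rule group_hom.normal_kernel[OF group_hom_exponent_sum_mod])

lemma FactGroup_exponent_kernel_iso:
  assumes "1 \<le> n"
  shows "free_group n Mod exponent_kernel n k \<cong> integer_mod_group k"
proof -
  have "(\<lambda>w. exponent_sum w mod int k) ` carrier (free_group n) = carrier (integer_mod_group k)"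
  proof -
    have "(\<lambda>w. exponent_sum w mod int k) ` carrier (free_group n)
        = (\<lambda>j. j mod int k) ` exponent_sum ` carrier (free_group n)"
      by (simp add: image_image)
    also have "\<dots> = (\<lambda>j. j mod int k) ` UNIV"
      by (simp only: exponent_sum_surj[OF assms])
    also have "\<dots> = carrier (integer_mod_group k)"
    proof (cases "k = 0")
      case False
      have "j \<in> (\<lambda>j. j mod int k) ` UNIV" if "j \<in> {0..<int k}" for j
        using that by (intro image_eqI[where x = j]) simp_all
      with False show ?thesis
        by (auto simp: carrier_integer_mod_group)
    qed (simp add: carrier_integer_mod_group)
    finally show ?thesis .
  qed
  then show ?thesis
    unfolding exponent_kernel_def by (rule group_hom.FactGroup_iso[OF group_hom_exponent_sum_mod])
qed

lemma co_hopfian_FactGroup_exponent_kernel_iff: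
  assumes "1 \<le> n"
  shows "co_hopfian (free_group n Mod exponent_kernel n k) \<longleftrightarrow> k \<noteq> 0"
proof
  assume "co_hopfian (free_group n Mod exponent_kernel n k)"
  with normal.factorgroup_is_group[OF normal_exponent_kernel] FactGroup_exponent_kernel_iso[OF assms]
  have "co_hopfian (integer_mod_group k)"
    by (rule co_hopfian_iso)
  moreover have "integer_mod_group 0 = integer_group"
    by (simp add: integer_mod_group_def)
  ultimately show "k \<noteq> 0"
    using not_co_hopfian_integer_group by metis
next
  assume "k \<noteq> 0"
  then have "finite (carrier (integer_mod_group k))"
    by (simp add: carrier_integer_mod_group)
  then show "co_hopfian (free_group n Mod exponent_kernel n k)"
    using iso_finite[OF FactGroup_exponent_kernel_iso[OF assms]] by (simp add: co_hopfian_finite)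
qed

section \<open>The space of normal subgroups\<close>

lemma char_fun_apply: "w \<in> carrier (free_group n) \<Longrightarrow> char_fun n N w \<longleftrightarrow> w \<in> N"
  by (simp add: char_fun_def)

lemma char_fun_support: "N \<subseteq> carrier (free_group n) \<Longrightarrow> {w \<in> carrier (free_group n). char_fun n N w} = N"
  by (auto simp: char_fun_def)

lemma char_fun_inject:
  "N \<subseteq> carrier (free_group n) \<Longrightarrow> M \<subseteq> carrier (free_group n) \<Longrightarrow>
     char_fun n N = char_fun n M \<longleftrightarrow> N = M"
  by (metis char_fun_support)

lemma Gn_subset_topspace: "Gn n \<subseteq> topspace (cantor_top n)"
  by (auto simp: Gn_def cantor_top_def char_fun_def)

lemma openin_Gn_top_eval:
  assumes "w \<in> carrier (free_group n)"
  shows "openin (Gn_top n) {f \<in> Gn n. f w = b}"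
proof -
  have "continuous_map (cantor_top n) (discrete_topology UNIV) (\<lambda>f. f w)"
    unfolding cantor_top_def by (rule continuous_map_product_projection[OF assms])
  then have "openin (cantor_top n) {f \<in> topspace (cantor_top n). f w \<in> {b}}"
    by (rule openin_continuous_map_preimage) simp
  moreover have "{f \<in> Gn n. f w = b} = {f \<in> topspace (cantor_top n). f w \<in> {b}} \<inter> Gn n"
    using Gn_subset_topspace[of n] by auto
  ultimately show ?thesis
    unfolding Gn_top_def openin_subtopology by blast
qed

lemma openin_cohopf_condition:
  assumes "1 \<le> n"
  shows "openin (Gn_top n) {f \<in> Gn n. cohopf_condition n us {w \<in> carrier (free_group n). f w}}"
proof -
  let ?F = "free_group n"
  let ?B = "\<lambda>w b. {f \<in> Gn n. f w = b}"
  let ?g = "\<lambda>i v. word_subst n us v \<otimes>\<^bsub>?F\<^esub> inv\<^bsub>?F\<^esub> free_gen i"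
  let ?A1 = "\<Union>r \<in> carrier ?F. ?B r True \<inter> ?B (word_subst n us r) False"
  let ?A2 = "\<Union>w \<in> carrier ?F. ?B (word_subst n us w) True \<inter> ?B w False"
  let ?A3 = "\<Inter>i \<in> {..<n}. \<Union>v \<in> carrier ?F. ?B (?g i v) True"
  have g_carrier: "?g i v \<in> carrier ?F" if "i < n" for i v
    using that by (simp add: letter_in_free_group word_subst_carrier)
  have B: "openin (Gn_top n) (?B w b)" if "w \<in> carrier ?F" for w b
    using that by (rule openin_Gn_top_eval)
  have "openin (Gn_top n) ?A1" "openin (Gn_top n) ?A2"
    by (intro openin_Union; blast intro: openin_Int B word_subst_carrier)+
  moreover have "openin (Gn_top n) (\<Union>v \<in> carrier ?F. ?B (?g i v) True)" if "i < n" for i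
    by (intro openin_Union) (blast intro: B g_carrier[OF that])
  then have "openin (Gn_top n) ?A3"
    using assms by (intro openin_Inter) (auto simp: lessThan_empty_iff)
  moreover have "{f \<in> Gn n. cohopf_condition n us {w \<in> carrier ?F. f w}} = ?A1 \<union> ?A2 \<union> ?A3"
  proof (rule Set.set_eqI)
    fix f
    have A1: "f \<in> ?A1 \<longleftrightarrow> f \<in> Gn n \<and> (\<exists>r \<in> carrier ?F. f r \<and> \<not> f (word_subst n us r))"
      and A2: "f \<in> ?A2 \<longleftrightarrow> f \<in> Gn n \<and> (\<exists>w \<in> carrier ?F. f (word_subst n us w) \<and> \<not> f w)"
      by blast+
    have "f \<in> ?A3 \<longleftrightarrow> (\<forall>i<n. f \<in> Gn n \<and> (\<exists>v \<in> carrier ?F. f (?g i v)))"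
      by auto
    also have "\<dots> \<longleftrightarrow> f \<in> Gn n \<and> (\<forall>i<n. \<exists>v \<in> carrier ?F. f (?g i v))"
      using assms by force
    finally have A3: "f \<in> ?A3 \<longleftrightarrow> f \<in> Gn n \<and> (\<forall>i<n. \<exists>v \<in> carrier ?F. f (?g i v))" .
    show "f \<in> {f \<in> Gn n. cohopf_condition n us {w \<in> carrier ?F. f w}} \<longleftrightarrow> f \<in> ?A1 \<union> ?A2 \<union> ?A3"
      unfolding mem_Collect_eq Un_iff cohopf_condition_Collect_iff A1 A2 A3 by blast
  qed
  ultimately show ?thesis
    by (simp add: openin_Un)
qed

lemma Pi02_co_hopfian_quotients:
  assumes "1 \<le> n"
  shows "Pi02 (Gn_top n) (char_fun n ` {N. N \<lhd> free_group n \<and> co_hopfian (free_group n Mod N)})"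
proof -
  let ?C = "char_fun n ` {N. N \<lhd> free_group n \<and> co_hopfian (free_group n Mod N)}"
  define V where "V k = {f \<in> Gn n. cohopf_condition n (from_nat k) {w \<in> carrier (free_group n). f w}}"
    for k
  have support: "{w \<in> carrier (free_group n). char_fun n N w} = N" if "N \<lhd> free_group n" for N
    using that by (simp add: char_fun_support normal_imp_subgroup subgroup.subset)
  have "f \<in> ?C \<longleftrightarrow> f \<in> \<Inter> (range V)" for f
  proof -
    have "(\<forall>k. cohopf_condition n (from_nat k) N) \<longleftrightarrow> (\<forall>us. cohopf_condition n us N)" for N
      by (metis from_nat_to_nat)
    then have "f \<in> \<Inter> (range V) \<longleftrightarrow>
        f \<in> Gn n \<and> (\<forall>us. cohopf_condition n us {w \<in> carrier (free_group n). f w})"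
      unfolding V_def by blast
    then show ?thesis
      unfolding Gn_def using support co_hopfian_FactGroup_free_group_iff by auto
  qed
  then have "?C = \<Inter> (range V)"
    by blast
  moreover have "openin (Gn_top n) (V k)" for k
    unfolding V_def by (rule openin_cohopf_condition[OF assms])
  ultimately show ?thesis
    unfolding Pi02_def by blast
qed

lemma limitin_exponent_kernel:
  "limitin (Gn_top n) (\<lambda>k. char_fun n (exponent_kernel n k)) (char_fun n (exponent_kernel n 0)) sequentially"
proof -
  have in_Gn: "char_fun n (exponent_kernel n k) \<in> Gn n" for k
    using normal_exponent_kernel by (auto simp: Gn_def)
  have "\<forall>\<^sub>F k in sequentially.
          char_fun n (exponent_kernel n k) w = char_fun n (exponent_kernel n 0) w"
    if "w \<in> carrier (free_group n)" for w
  proof (rule eventually_sequentiallyI)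
    fix k
    assume "Suc (nat \<bar>exponent_sum w\<bar>) \<le> k"
    then have "\<bar>exponent_sum w\<bar> < int k"
      by (simp add: nat_less_iff flip: Suc_le_eq)
    then have "int k dvd exponent_sum w \<longleftrightarrow> exponent_sum w = 0"
      by (metis abs_of_nat dvd_0_right dvd_imp_le_int not_less)
    then show "char_fun n (exponent_kernel n k) w = char_fun n (exponent_kernel n 0) w"
      using that by (simp add: char_fun_apply exponent_kernel_iff)
  qed
  then have "limitin (cantor_top n) (\<lambda>k. char_fun n (exponent_kernel n k)) (char_fun n (exponent_kernel n 0))
               sequentially"
    unfolding cantor_top_def limitin_componentwise
    using in_Gn Gn_subset_topspace by (auto simp: char_fun_def cantor_top_def intro: limitin_eventually)
  with in_Gn show ?thesis
    by (simp add: Gn_top_def limitin_subtopology)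
qed

lemma not_closedin_co_hopfian_quotients:
  assumes "1 \<le> n"
  shows "\<not> closedin (Gn_top n) (char_fun n ` {N. N \<lhd> free_group n \<and> co_hopfian (free_group n Mod N)})"
proof
  assume "closedin (Gn_top n) (char_fun n ` {N. N \<lhd> free_group n \<and> co_hopfian (free_group n Mod N)})"
  moreover have "\<forall>\<^sub>F k in sequentially. char_fun n (exponent_kernel n k)
      \<in> char_fun n ` {N. N \<lhd> free_group n \<and> co_hopfian (free_group n Mod N)}"
    using normal_exponent_kernel co_hopfian_FactGroup_exponent_kernel_iff[OF assms]
    by (auto intro!: eventually_sequentiallyI[of 1])
  ultimately have "char_fun n (exponent_kernel n 0)
      \<in> char_fun n ` {N. N \<lhd> free_group n \<and> co_hopfian (free_group n Mod N)}"
    using limitin_closedin[OF limitin_exponent_kernel] by simp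
  then obtain N where N: "N \<lhd> free_group n" "co_hopfian (free_group n Mod N)"
    and "char_fun n (exponent_kernel n 0) = char_fun n N"
    by auto
  then have "N = exponent_kernel n 0"
    using char_fun_inject normal_exponent_kernel by (metis normal_imp_subgroup subgroup.subset)
  with N show False
    using co_hopfian_FactGroup_exponent_kernel_iff[OF assms] by simp
qed

theorem mainTheorem16:
  fixes n :: nat
  assumes "2 \<le> n"
  defines "C \<equiv> char_fun n ` {N. normal N (free_group n) \<and> co_hopfian (free_group n Mod N)}"
  shows "Pi02 (Gn_top n) C \<and> \<not> closedin (Gn_top n) C"
  using Pi02_co_hopfian_quotients not_closedin_co_hopfian_quotients assms by simp

end
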